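(* Let $G=(V,E)$ be a tree on $n$ vertices, let $P$ be any valid search tree on $G$, and let $X=x_1,\dots,x_m$ be any sequence of vertices of $G$. Then $$\mathrm{OPT}(G,X)\;\ge\; \frac{I(G,P,X)}{2}-n .$$
   Context: Search tree on a tree: a rooted tree $T$ is a valid search tree on an unrooted tree $G$ if the root $r$ of $T$ is a vertex of $G$ and the subtrees of $T\setminus r$ are valid search trees on the connected components of $G\setminus r$ (there are no degree restrictions and no order among children). Rotation on a non-root node $v$ of $T$ with parent $p$: swap $p$ and $v$ (so $v$ takes $p$'s place and $p$ becomes a child of $v$); all children of $p$ remain children of $p$; for a child $u$ of $v$ with subtree node set $S_u$, if some node of $S_u$ is adjacent to $p$ in $G$ (this happens for at most one child) then $u$ becomes a child of $p$; all other children of $v$ remain children of $v$. GST model: a valid search tree $T$ on $G$ is maintained with a single pointer; at unit cost one may move the pointer to a child or the parent of the current node, or rotate the current node. A search for $v\in V$ is any sequence of unit-cost operations in which the pointer starts at the root of the current tree and points to $v$ at some point. $\mathrm{OPT}(G,X)$ is the minimum total number of unit-cost operations of any GST-model algorithm (even one knowing $X$ in advance) executing the searches $x_1,\dots,x_m$ in order, starting from any initial valid search tree on $G$. Preferred child: for a fixed search tree $P$ on $G$ and a non-leaf node $y$ of $P$ with children $y_1,\dots,y_d$ (with $y_1$ a fixed designated child), at time $t\in\{1,\dots,m\}$ the preferred child of $y$ is the child $y_i$ whose subtree $P(y_i)$ contains the most recent searched vertex among $x_1,\dots,x_t$ lying in the subtree $P(y)$; it is undefined if no such search exists, and if that most recent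 search is to $y$ itself, the preferred child is $y_1$. Interleave bound: the interleave bound of a node $y$ of $P$ is the number of times its preferred child changes over times $1,2,\dots,m$; $I(G,P,X)$ is the sum of the interleave bounds of all nodes of $P$ (here $P$ is fixed and does not change). *)

theory Defs
  imports Complex_Main
begin

definition ind_edge :: "('a \<Rightarrow> 'a \<Rightarrow> bool) \<Rightarrow> 'a set \<Rightarrow> 'a \<Rightarrow> 'a \<Rightarrow> bool" where
  "ind_edge E A u v \<longleftrightarrow> u \<in> A \<and> v \<in> A \<and> E u v"

definition comp :: "('a \<Rightarrow> 'a \<Rightarrow> bool) \<Rightarrow> 'a set \<Rightarrow> 'a \<Rightarrow> 'a set" where
  "comp E A x = {y. (ind_edge E A)\<^sup>*\<^sup>* x y}"

definition comps :: "('a \<Rightarrow> 'a \<Rightarrow> bool) \<Rightarrow> 'a set \<Rightarrow> 'a set set" where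
  "comps E A = comp E A ` A"

definition is_tree :: "'a set \<Rightarrow> ('a \<Rightarrow> 'a \<Rightarrow> bool) \<Rightarrow> bool" where
  "is_tree V E \<longleftrightarrow> finite V \<and> V \<noteq> {}
     \<and> (\<forall>u v. E u v \<longrightarrow> u \<in> V \<and> v \<in> V)
     \<and> (\<forall>u v. E u v \<longrightarrow> E v u) \<and> (\<forall>u. \<not> E u u)
     \<and> comps E V = {V}
     \<and> card {{u, v} | u v. E u v} = card V - 1"

(* P x = Some p : p is the parent of x;  P x = None : x is the root (or x not a node) *)

definition desc :: "('a \<Rightarrow> 'a option) \<Rightarrow> 'a \<Rightarrow> 'a set" where
  "desc P y = {x. (\<lambda>a b. P a = Some b)\<^sup>*\<^sup>* x y}"

definition rooted_tree :: "'a set \<Rightarrow> ('a \<Rightarrow> 'a option) \<Rightarrow> bool" where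
  "rooted_tree V P \<longleftrightarrow> (\<forall>x. x \<notin> V \<longrightarrow> P x = None)
     \<and> (\<forall>x p. P x = Some p \<longrightarrow> p \<in> V)
     \<and> (\<exists>r\<in>V. P r = None \<and> (\<forall>x\<in>V. (\<lambda>a b. P a = Some b)\<^sup>*\<^sup>* x r))"

definition root :: "'a set \<Rightarrow> ('a \<Rightarrow> 'a option) \<Rightarrow> 'a" where
  "root V P = (THE r. r \<in> V \<and> P r = None)"

inductive vst :: "('a \<Rightarrow> 'a \<Rightarrow> bool) \<Rightarrow> ('a \<Rightarrow> 'a option) \<Rightarrow> 'a set \<Rightarrow> 'a \<Rightarrow> bool"
  for E P where
  "r \<in> S \<Longrightarrow> {desc P c | c. P c = Some r} = comps E (S - {r})
   \<Longrightarrow> (\<forall>c. P c = Some r \<longrightarrow> vst E P (desc P c) c) \<Longrightarrow> vst E P S r"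

definition valid_st :: "'a set \<Rightarrow> ('a \<Rightarrow> 'a \<Rightarrow> bool) \<Rightarrow> ('a \<Rightarrow> 'a option) \<Rightarrow> bool" where
  "valid_st V E P \<longleftrightarrow> rooted_tree V P \<and> vst E P V (root V P)"

definition rotate :: "('a \<Rightarrow> 'a \<Rightarrow> bool) \<Rightarrow> ('a \<Rightarrow> 'a option) \<Rightarrow> 'a \<Rightarrow> ('a \<Rightarrow> 'a option)" where
  "rotate E P v = (case P v of None \<Rightarrow> P | Some p \<Rightarrow>
     (\<lambda>x. if x = v then P p
          else if x = p then Some v
          else if P x = Some v \<and> (\<exists>w\<in>desc P x. E w p) then Some p
          else P x))"

(* configuration: (current search tree, pointer) ; one unit-cost operation *)
definition gst_step :: "('a \<Rightarrow> 'a \<Rightarrow> bool) \<Rightarrow> ('a \<Rightarrow> 'a option) \<times> 'a \<Rightarrow> ('a \<Rightarrow> 'a option) \<times> 'a \<Rightarrow> bool" where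
  "gst_step E c c' \<longleftrightarrow>
     (fst c' = fst c \<and> (fst c (snd c) = Some (snd c') \<or> fst c (snd c') = Some (snd c)))
   \<or> (fst c (snd c) \<noteq> None \<and> fst c' = rotate E (fst c) (snd c) \<and> snd c' = snd c)"

definition search_run :: "'a set \<Rightarrow> ('a \<Rightarrow> 'a \<Rightarrow> bool) \<Rightarrow> ('a \<Rightarrow> 'a option) \<Rightarrow> 'a
     \<Rightarrow> (('a \<Rightarrow> 'a option) \<times> 'a) list \<Rightarrow> bool" where
  "search_run V E T x cs \<longleftrightarrow> cs \<noteq> [] \<and> hd cs = (T, root V T)
     \<and> (\<forall>i. Suc i < length cs \<longrightarrow> gst_step E (cs ! i) (cs ! Suc i))
     \<and> x \<in> snd ` set cs"

fun gst_exec :: "'a set \<Rightarrow> ('a \<Rightarrow> 'a \<Rightarrow> bool) \<Rightarrow> ('a \<Rightarrow> 'a option) \<Rightarrow> 'a list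
     \<Rightarrow> (('a \<Rightarrow> 'a option) \<times> 'a) list list \<Rightarrow> bool" where
  "gst_exec V E T [] [] = True"
| "gst_exec V E T (x # xs) (cs # css) =
     (search_run V E T x cs \<and> gst_exec V E (fst (last cs)) xs css)"
| "gst_exec V E T _ _ = False"

definition exec_cost :: "(('a \<Rightarrow> 'a option) \<times> 'a) list list \<Rightarrow> nat" where
  "exec_cost css = sum_list (map (\<lambda>cs. length cs - 1) css)"

definition OPT :: "'a set \<Rightarrow> ('a \<Rightarrow> 'a \<Rightarrow> bool) \<Rightarrow> 'a list \<Rightarrow> nat" where
  "OPT V E X = Inf {exec_cost css | T0 css. valid_st V E T0 \<and> gst_exec V E T0 X css}"

(* pref_child P d X y t: preferred child of y at time t (after searches x_1..x_t,
   i.e. X!0..X!(t-1)); d y is the designated child of y; None = undefined *)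
definition pref_child :: "('a \<Rightarrow> 'a option) \<Rightarrow> ('a \<Rightarrow> 'a) \<Rightarrow> 'a list \<Rightarrow> 'a \<Rightarrow> nat \<Rightarrow> 'a option" where
  "pref_child P d X y t =
     (let S = {j. j < t \<and> X ! j \<in> desc P y} in
      if S = {} \<or> (\<nexists>c. P c = Some y) then None
      else let x = X ! Max S in
        if x = y then Some (d y)
        else Some (THE c. P c = Some y \<and> x \<in> desc P c))"

definition interleave_node :: "('a \<Rightarrow> 'a option) \<Rightarrow> ('a \<Rightarrow> 'a) \<Rightarrow> 'a list \<Rightarrow> 'a \<Rightarrow> nat" where
  "interleave_node P d X y = card {t. 2 \<le> t \<and> t \<le> length X
      \<and> pref_child P d X y (t - 1) \<noteq> None
      \<and> pref_child P d X y t \<noteq> pref_child P d X y (t - 1)}"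

definition interleave :: "'a set \<Rightarrow> ('a \<Rightarrow> 'a option) \<Rightarrow> ('a \<Rightarrow> 'a) \<Rightarrow> 'a list \<Rightarrow> nat" where
  "interleave V P d X = (\<Sum>y\<in>V. interleave_node P d X y)"

end

theory Submission
  imports Defs
begin

text \<open>
  In fact every execution in the GST model costs at least \<open>I(G,P,X)/2\<close>. Rotations do not keep
  search trees valid, but they keep every edge of \<open>G\<close> vertical (joining an ancestor and a
  descendant), and in such a tree every connected vertex set has a topmost node. For a node
  \<open>y\<close> of \<open>P\<close>, this applies to the subtree of \<open>y\<close> and to each of its branches (\<open>{y}\<close> and the
  subtrees of its children). Say that a search charges \<open>y\<close> if it visits a node that is topmost
  for a branch of \<open>y\<close> but not for the whole subtree; such a node serves only one \<open>y\<close> and is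
  never the root, so a search of cost \<open>c\<close> charges at most \<open>c\<close> nodes. As long as \<open>y\<close> is not
  charged, the branch containing the top of the subtree of \<open>y\<close> stays fixed, and every search
  into the subtree ends in that branch. Hence each change of the preferred child of \<open>y\<close> is
  preceded by a charge of \<open>y\<close> since the previous search into its subtree, and each charge
  serves at most two such changes.
\<close>

abbreviation parent_rel :: "('a \<Rightarrow> 'a option) \<Rightarrow> 'a \<Rightarrow> 'a \<Rightarrow> bool" where
  "parent_rel T \<equiv> \<lambda>a b. T a = Some b"

lemma mem_desc_iff: "x \<in> desc T y \<longleftrightarrow> (parent_rel T)\<^sup>*\<^sup>* x y"
  by (simp add: desc_def)

lemma desc_refl: "y \<in> desc T y"
  by (simp add: mem_desc_iff)

lemma desc_trans: "x \<in> desc T y \<Longrightarrow> y \<in> desc T z \<Longrightarrow> x \<in> desc T z"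
  unfolding mem_desc_iff by (rule rtranclp_trans)

lemma desc_parent: "T y = Some z \<Longrightarrow> x \<in> desc T y \<Longrightarrow> x \<in> desc T z"
  unfolding mem_desc_iff by (rule rtranclp.rtrancl_into_rtrancl)

lemma desc_of_parentless: "T r = None \<Longrightarrow> r \<in> desc T z \<Longrightarrow> r = z"
  unfolding mem_desc_iff by (erule converse_rtranclpE) auto

lemma ancestors_linear:
  assumes "(parent_rel T)\<^sup>*\<^sup>* a b" "(parent_rel T)\<^sup>*\<^sup>* a c"
  shows "(parent_rel T)\<^sup>*\<^sup>* b c \<or> (parent_rel T)\<^sup>*\<^sup>* c b"
  using assms
proof (induction arbitrary: c rule: converse_rtranclp_induct)
  case base
  then show ?case by simp
next
  case (step a a1)
  from step.prems show ?case
  proof (cases rule: converse_rtranclpE)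
    case base
    then show ?thesis using step.hyps by (simp add: converse_rtranclp_into_rtranclp)
  next
    case (step a')
    then have "a' = a1"
      using \<open>T a = Some a1\<close> by simp
    then show ?thesis
      using step.IH step(2) by blast
  qed
qed

lemma ancestor_path_transfer:
  assumes "(parent_rel T)\<^sup>*\<^sup>* a b"
    and "\<And>x. (parent_rel T)\<^sup>*\<^sup>* a x \<Longrightarrow> (parent_rel T)\<^sup>+\<^sup>+ x b \<Longrightarrow> T' x = T x"
  shows "(parent_rel T')\<^sup>*\<^sup>* a b"
  using assms
proof (induction rule: converse_rtranclp_induct)
  case base
  then show ?case by simp
next
  case (step a a1)
  have "(parent_rel T')\<^sup>*\<^sup>* a1 b"
  proof (rule step.IH)
    fix x
    assume "(parent_rel T)\<^sup>*\<^sup>* a1 x" "(parent_rel T)\<^sup>+\<^sup>+ x b"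
    then show "T' x = T x"
      using step.prems step.hyps(1) by (meson converse_rtranclp_into_rtranclp)
  qed
  moreover have "T' a = Some a1"
    using step.prems[of a] step.hyps by (simp add: rtranclp_into_tranclp2)
  ultimately show ?case
    by (simp add: converse_rtranclp_into_rtranclp)
qed

lemma rooted_tree_parent_in:
  assumes "rooted_tree V T" "T x = Some q"
  shows "x \<in> V" "q \<in> V"
  using assms unfolding rooted_tree_def by force+

lemma rooted_tree_acyclic:
  assumes "rooted_tree V T"
  shows "\<not> (parent_rel T)\<^sup>+\<^sup>+ x x"
proof
  assume cyc: "(parent_rel T)\<^sup>+\<^sup>+ x x"
  obtain r where r: "T r = None" "\<forall>x\<in>V. (parent_rel T)\<^sup>*\<^sup>* x r"
    using assms unfolding rooted_tree_def by blast
  obtain x1 where "T x = Some x1"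
    using cyc by (blast dest: tranclpD)
  then have "(parent_rel T)\<^sup>*\<^sup>* x r"
    using r(2) rooted_tree_parent_in[OF assms] by blast
  then show False
    using cyc
  proof (induction rule: converse_rtranclp_induct)
    case base
    then show ?case using r(1) by (auto dest: tranclpD)
  next
    case (step y z)
    then obtain w where "T y = Some w" "(parent_rel T)\<^sup>*\<^sup>* w y"
      by (blast dest: tranclpD)
    then have "(parent_rel T)\<^sup>+\<^sup>+ z z"
      using step.hyps(1) by (simp add: rtranclp_into_tranclp1)
    then show ?case by (rule step.IH)
  qed
qed

lemma rooted_tree_antisym:
  assumes "rooted_tree V T" "(parent_rel T)\<^sup>*\<^sup>* a b" "(parent_rel T)\<^sup>*\<^sup>* b a"
  shows "a = b"
proof (rule ccontr)
  assume "a \<noteq> b"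
  then have "(parent_rel T)\<^sup>+\<^sup>+ a b"
    using assms(2) by (blast dest: rtranclpD)
  then have "(parent_rel T)\<^sup>+\<^sup>+ a a"
    using assms(3) by (rule tranclp_rtranclp_tranclp)
  then show False
    using rooted_tree_acyclic[OF assms(1)] by blast
qed

lemma rooted_tree_desc_antisym:
  "rooted_tree V T \<Longrightarrow> a \<in> desc T b \<Longrightarrow> b \<in> desc T a \<Longrightarrow> a = b"
  unfolding mem_desc_iff by (rule rooted_tree_antisym)

lemma rooted_tree_parent_notin_desc:
  assumes "rooted_tree V T" "T c = Some y"
  shows "y \<notin> desc T c"
  using rooted_tree_acyclic[OF assms(1), of y] assms(2)
  by (auto simp: mem_desc_iff intro: rtranclp_into_tranclp1)

lemma rooted_tree_root:
  assumes "rooted_tree V T"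
  shows "root V T \<in> V" "T (root V T) = None" "\<forall>x\<in>V. (parent_rel T)\<^sup>*\<^sup>* x (root V T)"
    "\<And>r. r \<in> V \<Longrightarrow> T r = None \<Longrightarrow> r = root V T"
proof -
  obtain r where r: "r \<in> V" "T r = None" "\<forall>x\<in>V. (parent_rel T)\<^sup>*\<^sup>* x r"
    using assms unfolding rooted_tree_def by blast
  have unique: "r' = r" if "r' \<in> V" "T r' = None" for r'
  proof -
    have "(parent_rel T)\<^sup>*\<^sup>* r' r"
      using r(3) that(1) by blast
    then show ?thesis
      using that(2) by (cases rule: converse_rtranclpE) auto
  qed
  have "root V T = r"
    unfolding root_def
  proof (rule the_equality)
    show "r \<in> V \<and> T r = None"
      using r by simp
    show "\<And>r'. r' \<in> V \<and> T r' = None \<Longrightarrow> r' = r"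
      using unique by blast
  qed
  then show "root V T \<in> V" "T (root V T) = None" "\<forall>x\<in>V. (parent_rel T)\<^sup>*\<^sup>* x (root V T)"
    using r by simp_all
  show "\<And>r. r \<in> V \<Longrightarrow> T r = None \<Longrightarrow> r = root V T"
    using unique \<open>root V T = r\<close> by blast
qed

lemma rooted_tree_desc_subset:
  assumes "rooted_tree V T" "y \<in> V"
  shows "desc T y \<subseteq> V"
proof
  fix x
  assume "x \<in> desc T y"
  then show "x \<in> V"
    unfolding mem_desc_iff
  proof (cases rule: converse_rtranclpE)
    case base
    then show ?thesis using assms(2) by simp
  next
    case (step x1)
    then show ?thesis using rooted_tree_parent_in(1)[OF assms(1)] by blast
  qed
qed

lemma rooted_tree_desc_root:
  assumes "rooted_tree V T"
  shows "desc T (root V T) = V"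
proof
  show "desc T (root V T) \<subseteq> V"
    using rooted_tree_desc_subset[OF assms rooted_tree_root(1)[OF assms]] .
  show "V \<subseteq> desc T (root V T)"
    using rooted_tree_root(3)[OF assms] by (auto simp: mem_desc_iff)
qed

section \<open>Rotations\<close>

locale rotation =
  fixes V :: "'a set" and E :: "'a \<Rightarrow> 'a \<Rightarrow> bool" and T :: "'a \<Rightarrow> 'a option" and v p :: 'a
  assumes rooted: "rooted_tree V T" and parent_v: "T v = Some p"
begin

definition T' :: "'a \<Rightarrow> 'a option" where
  "T' = rotate E T v"

definition moved :: "'a \<Rightarrow> bool" where
  "moved x \<longleftrightarrow> T x = Some v \<and> (\<exists>w\<in>desc T x. E w p)"

lemma acyclic: "\<not> (parent_rel T)\<^sup>+\<^sup>+ x x"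
  using rooted_tree_acyclic[OF rooted] .

lemma T'_eq:
  "T' x = (if x = v then T p else if x = p then Some v else if moved x then Some p else T x)"
  unfolding T'_def rotate_def moved_def using parent_v by simp

lemma v_neq_p: "v \<noteq> p"
  using acyclic[of v] parent_v by (auto intro: tranclp.r_into_trancl)

lemma parent_p_neq_v: "T p \<noteq> Some v"
  using acyclic[of v] parent_v by (meson tranclp.r_into_trancl tranclp.trancl_into_trancl)

lemma moved_neq: "moved x \<Longrightarrow> x \<noteq> v \<and> x \<noteq> p"
  unfolding moved_def using parent_v v_neq_p parent_p_neq_v by auto

lemma T'_cases: "T' x = T x \<or> x = v \<or> x = p \<or> moved x"
  unfolding T'_eq by auto

lemma T'_v: "T' v = T p"
  unfolding T'_eq by simp

lemma T'_p: "T' p = Some v"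
  unfolding T'_eq using v_neq_p by simp

lemma T'_moved: "moved x \<Longrightarrow> T' x = Some p"
  unfolding T'_eq using moved_neq by simp

lemma v_in_V: "v \<in> V" and p_in_V: "p \<in> V"
  using rooted_tree_parent_in[OF rooted parent_v] by auto

lemma v_in_desc_p: "v \<in> desc T p"
  using parent_v by (simp add: mem_desc_iff r_into_rtranclp)

lemma parent_p_notin_desc_p: "T p = Some q \<Longrightarrow> q \<notin> desc T p"
  using acyclic[of p] by (auto simp: mem_desc_iff intro: rtranclp_into_tranclp2)

lemma T'_outside:
  assumes "x \<notin> desc T p"
  shows "T' x = T x"
proof -
  have "x \<noteq> v" "x \<noteq> p"
    using assms v_in_desc_p desc_refl[of p T] by auto
  moreover have "\<not> moved x"
  proof
    assume "moved x"
    then have "x \<in> desc T v"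
      using desc_parent desc_refl unfolding moved_def by metis
    then show False
      using assms v_in_desc_p desc_trans by metis
  qed
  ultimately show ?thesis
    unfolding T'_eq by simp
qed

lemma T'_ancestor_v: "(parent_rel T)\<^sup>*\<^sup>* a p \<Longrightarrow> (parent_rel T')\<^sup>*\<^sup>* a v"
proof (induction rule: converse_rtranclp_induct)
  case base
  then show ?case using T'_p by (simp add: r_into_rtranclp)
next
  case (step a a1)
  consider "T' a = T a" | "a = v" | "a = p" | "moved a"
    using T'_cases by blast
  then show ?case
  proof cases
    case 1
    then show ?thesis using step by (simp add: converse_rtranclp_into_rtranclp)
  next
    case 2
    then show ?thesis by simp
  next
    case 3
    then show ?thesis using T'_p by (simp add: r_into_rtranclp)
  next
    case 4
    then show ?thesis using T'_moved T'_p by (meson converse_rtranclp_into_rtranclp r_into_rtranclp)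
  qed
qed

lemma T'_ancestor_outside:
  assumes "(parent_rel T)\<^sup>*\<^sup>* x b" "x \<notin> desc T p"
  shows "(parent_rel T')\<^sup>*\<^sup>* x b"
proof (rule ancestor_path_transfer[OF assms(1)])
  fix y
  assume "(parent_rel T)\<^sup>*\<^sup>* x y"
  then have "y \<notin> desc T p"
    using assms(2) desc_trans by (fastforce simp: mem_desc_iff)
  then show "T' y = T y"
    by (rule T'_outside)
qed

lemma vertical_through_p:
  assumes "(parent_rel T)\<^sup>*\<^sup>* a p" "(parent_rel T)\<^sup>+\<^sup>+ p b"
  shows "(parent_rel T')\<^sup>*\<^sup>* a b"
proof -
  obtain q where q: "T p = Some q" "(parent_rel T)\<^sup>*\<^sup>* q b"
    using assms(2) by (blast dest: tranclpD)
  have "(parent_rel T')\<^sup>*\<^sup>* q b"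
    using T'_ancestor_outside q(2) parent_p_notin_desc_p[OF q(1)] .
  moreover have "T' v = Some q"
    using T'_v q(1) by simp
  ultimately show ?thesis
    using T'_ancestor_v[OF assms(1)] by (meson rtranclp.rtrancl_into_rtrancl rtranclp_trans)
qed

lemma T'_root_exists: "\<exists>r\<in>V. T' r = None \<and> (\<forall>x\<in>V. (parent_rel T')\<^sup>*\<^sup>* x r)"
proof -
  obtain r where r: "r \<in> V" "T r = None" "\<forall>x\<in>V. (parent_rel T)\<^sup>*\<^sup>* x r"
    using rooted unfolding rooted_tree_def by blast
  show ?thesis
  proof (cases "p = r")
    case True
    then have "\<forall>x\<in>V. (parent_rel T')\<^sup>*\<^sup>* x v"
      using r T'_ancestor_v by blast
    then show ?thesis
      using T'_v True r(2) v_in_V by auto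
  next
    case False
    then have p_r: "(parent_rel T)\<^sup>+\<^sup>+ p r"
      using r(3) p_in_V by (blast dest: rtranclpD)
    have "r \<noteq> v" "\<not> moved r"
      using r(2) parent_v unfolding moved_def by auto
    then have "T' r = None"
      using r(2) False unfolding T'_eq by simp
    moreover have "(parent_rel T')\<^sup>*\<^sup>* x r" if "x \<in> V" for x
    proof (cases "x \<in> desc T p")
      case True
      then show ?thesis
        using vertical_through_p p_r by (simp add: mem_desc_iff)
    next
      case False
      then show ?thesis
        using r(3) that by (blast intro: T'_ancestor_outside)
    qed
    ultimately show ?thesis
      using r(1) by blast
  qed
qed

lemma rooted_T': "rooted_tree V T'"
proof -
  have "T x = None" if "x \<notin> V" for x
    using rooted that unfolding rooted_tree_def by blast
  then have "\<forall>x. x \<notin> V \<longrightarrow> T' x = None"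
    using v_in_V p_in_V unfolding T'_eq moved_def by auto
  moreover have "\<forall>x q. T' x = Some q \<longrightarrow> q \<in> V"
    using v_in_V p_in_V rooted_tree_parent_in(2)[OF rooted] by (auto simp: T'_eq split: if_splits)
  ultimately show ?thesis
    unfolding rooted_tree_def using T'_root_exists by blast
qed

lemma T'_below_child_v:
  assumes "(parent_rel T)\<^sup>+\<^sup>+ x w" "T w = Some v"
  shows "T' x = T x"
proof -
  have not_v_w: "\<not> (parent_rel T)\<^sup>*\<^sup>* v w"
    using acyclic[of v] assms(2) by (blast intro: rtranclp_into_tranclp1)
  have "x \<noteq> v"
    using assms(1) not_v_w by (blast dest: tranclp_into_rtranclp)
  moreover have "x \<noteq> p"
    using assms(1) not_v_w parent_v
    by (meson converse_rtranclp_into_rtranclp tranclp_into_rtranclp)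
  moreover have "\<not> moved x"
    using assms(1) not_v_w unfolding moved_def by (auto dest: tranclpD)
  ultimately show ?thesis
    unfolding T'_eq by simp
qed

text \<open>
  An edge \<open>{a, b}\<close> of \<open>G\<close> with \<open>b\<close> an ancestor of \<open>a\<close> stays vertical after the rotation.
  The ancestor path from \<open>a\<close> to \<open>b\<close> survives unless it passes through \<open>p\<close>, through \<open>v\<close>
  or through a moved child of \<open>v\<close>.
\<close>

lemma vertical_through_v:
  assumes "E a p" "(parent_rel T)\<^sup>*\<^sup>* a v"
  shows "(parent_rel T')\<^sup>*\<^sup>* a p \<or> (parent_rel T')\<^sup>*\<^sup>* p a"
proof (cases "a = v")
  case True
  then show ?thesis
    using T'_p by (simp add: r_into_rtranclp)
next
  case False
  then obtain w where w: "(parent_rel T)\<^sup>*\<^sup>* a w" "T w = Some v"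
    using assms(2) by (blast dest: rtranclpD elim: tranclp.cases intro: tranclp_into_rtranclp)
  then have "moved w"
    unfolding moved_def using assms(1) by (auto simp: mem_desc_iff)
  moreover have "(parent_rel T')\<^sup>*\<^sup>* a w"
    by (rule ancestor_path_transfer[OF w(1)]) (use T'_below_child_v w(2) in blast)
  ultimately show ?thesis
    using T'_moved by (simp add: rtranclp.rtrancl_into_rtrancl)
qed

lemma vertical_through_moved:
  assumes "moved u" "(parent_rel T)\<^sup>*\<^sup>* a u"
  shows "(parent_rel T')\<^sup>*\<^sup>* a v"
proof -
  have "T u = Some v"
    using assms(1) by (simp add: moved_def)
  then have "(parent_rel T')\<^sup>*\<^sup>* a u"
    by (intro ancestor_path_transfer[OF assms(2)]) (use T'_below_child_v in blast)
  then have "(parent_rel T')\<^sup>*\<^sup>* a p"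
    using T'_moved[OF assms(1)] by (simp add: rtranclp.rtrancl_into_rtrancl)
  then show ?thesis
    using T'_p by (simp add: rtranclp.rtrancl_into_rtrancl)
qed

lemma vertical_T':
  assumes edge: "E a b" and ab: "(parent_rel T)\<^sup>*\<^sup>* a b"
  shows "(parent_rel T')\<^sup>*\<^sup>* a b \<or> (parent_rel T')\<^sup>*\<^sup>* b a"
proof (cases "(parent_rel T)\<^sup>*\<^sup>* a p \<and> (parent_rel T)\<^sup>+\<^sup>+ p b")
  case True
  then show ?thesis using vertical_through_p by blast
next
  case not_p: False
  show ?thesis
  proof (cases "(parent_rel T)\<^sup>*\<^sup>* a v \<and> (parent_rel T)\<^sup>+\<^sup>+ v b")
    case True
    then have "(parent_rel T)\<^sup>*\<^sup>* p b" "(parent_rel T)\<^sup>*\<^sup>* a p"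
      using parent_v by (auto dest: tranclpD intro: rtranclp.rtrancl_into_rtrancl)
    then have "b = p"
      using not_p by (blast dest: rtranclpD)
    then show ?thesis
      using vertical_through_v edge True by blast
  next
    case not_v: False
    show ?thesis
    proof (cases "\<exists>u. moved u \<and> (parent_rel T)\<^sup>*\<^sup>* a u \<and> (parent_rel T)\<^sup>+\<^sup>+ u b")
      case True
      then obtain u where u: "moved u" "(parent_rel T)\<^sup>*\<^sup>* a u" "(parent_rel T)\<^sup>+\<^sup>+ u b"
        by blast
      then have "T u = Some v"
        by (simp add: moved_def)
      then have "(parent_rel T)\<^sup>*\<^sup>* v b" "(parent_rel T)\<^sup>*\<^sup>* a v"
        using u by (auto dest: tranclpD intro: rtranclp.rtrancl_into_rtrancl)
      then have "b = v"
        using not_v by (blast dest: rtranclpD)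
      then show ?thesis
        using vertical_through_moved[OF u(1,2)] by simp
    next
      case not_moved: False
      have "(parent_rel T')\<^sup>*\<^sup>* a b"
        by (rule ancestor_path_transfer[OF ab]) (use T'_cases not_p not_v not_moved in blast)
      then show ?thesis ..
    qed
  qed
qed

lemma ancestor_T_if_ancestor_T':
  assumes "\<not> (parent_rel T)\<^sup>*\<^sup>* v z" "(parent_rel T')\<^sup>*\<^sup>* x z"
  shows "(parent_rel T)\<^sup>*\<^sup>* x z"
  using assms(2)
proof (induction rule: converse_rtranclp_induct)
  case base
  then show ?case by simp
next
  case (step x x1)
  consider "T' x = T x" | "x = v" | "x = p" | "moved x"
    using T'_cases by blast
  then show ?case
  proof cases
    case 1
    then have "T x = Some x1"
      using step.hyps(1) by simp
    then show ?thesis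
      using step.IH by (rule converse_rtranclp_into_rtranclp)
  next
    case 2
    then have "T p = Some x1"
      using step.hyps T'_v by simp
    then show ?thesis
      using assms(1) parent_v step.IH by (meson converse_rtranclp_into_rtranclp)
  next
    case 3
    then show ?thesis
      using assms(1) step T'_p by simp
  next
    case 4
    then have "x1 = p"
      using step.hyps(1) T'_moved by simp
    then show ?thesis
      using assms(1) parent_v step.IH by (meson converse_rtranclp_into_rtranclp)
  qed
qed

lemma desc_T'_unchanged:
  assumes "v \<notin> desc T z"
  shows "desc T' z = desc T z"
proof -
  have v_z: "\<not> (parent_rel T)\<^sup>*\<^sup>* v z"
    using assms by (simp add: mem_desc_iff)
  have "(parent_rel T')\<^sup>*\<^sup>* x z" if "(parent_rel T)\<^sup>*\<^sup>* x z" for x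
  proof (rule ancestor_path_transfer[OF that])
    fix y
    assume "(parent_rel T)\<^sup>+\<^sup>+ y z"
    then have "y \<noteq> v" "y \<noteq> p" "\<not> moved y"
      using v_z parent_v unfolding moved_def
      by (auto dest: tranclp_into_rtranclp tranclpD intro: converse_rtranclp_into_rtranclp)
    then show "T' y = T y"
      using T'_cases by blast
  qed
  then show ?thesis
    using ancestor_T_if_ancestor_T'[OF v_z] by (auto simp: mem_desc_iff)
qed

end

section \<open>Trees reachable in the GST model\<close>

text \<open>
  Rotations need not preserve validity of search trees in the sense of \<open>vst\<close>, but they preserve
  the weaker property that every edge of \<open>G\<close> joins an ancestor and a descendant.
\<close>

definition vertical_tree :: "'a set \<Rightarrow> ('a \<Rightarrow> 'a \<Rightarrow> bool) \<Rightarrow> ('a \<Rightarrow> 'a option) \<Rightarrow> bool" where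
  "vertical_tree V E T \<longleftrightarrow> rooted_tree V T \<and> (\<forall>a b. E a b \<longrightarrow> a \<in> desc T b \<or> b \<in> desc T a)"

lemma vertical_tree_rotate:
  assumes sym: "\<And>a b. E a b \<Longrightarrow> E b a" and vert: "vertical_tree V E T" and "T v = Some p"
  shows "vertical_tree V E (rotate E T v)"
proof -
  interpret rotation V E T v p
    using vert \<open>T v = Some p\<close> by unfold_locales (simp_all add: vertical_tree_def)
  have "a \<in> desc T' b \<or> b \<in> desc T' a" if "E a b" for a b
  proof -
    have "a \<in> desc T b \<or> b \<in> desc T a"
      using vert that by (simp add: vertical_tree_def)
    then show ?thesis
      using vertical_T'[OF that] vertical_T'[OF sym[OF that]] by (auto simp: mem_desc_iff)
  qed
  then show ?thesis
    using rooted_T' by (simp add: vertical_tree_def T'_def)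
qed

lemma gst_step_cases:
  assumes "gst_step E c c'"
  obtains (up) "fst c' = fst c" "fst c (snd c) = Some (snd c')"
    | (down) "fst c' = fst c" "fst c (snd c') = Some (snd c)"
    | (rotate) p where "fst c (snd c) = Some p" "fst c' = rotate E (fst c) (snd c)" "snd c' = snd c"
  using assms unfolding gst_step_def by auto

lemma gst_step_vertical:
  assumes "\<And>a b. E a b \<Longrightarrow> E b a" and "vertical_tree V E (fst c)" and "gst_step E c c'"
  shows "vertical_tree V E (fst c')"
  using assms(3)
proof (cases rule: gst_step_cases)
  case (rotate p)
  then show ?thesis
    using vertical_tree_rotate[OF assms(1,2)] by simp
qed (use assms(2) in simp_all)

lemma list_nth_induct:
  assumes "xs \<noteq> []" "Q (xs ! 0)" "\<And>i. Suc i < length xs \<Longrightarrow> Q (xs ! i) \<Longrightarrow> Q (xs ! Suc i)"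
  shows "\<forall>i<length xs. Q (xs ! i)"
proof (intro allI impI)
  fix i
  assume "i < length xs"
  then show "Q (xs ! i)"
    by (induction i) (use assms in auto)
qed

lemma search_run_vertical:
  assumes sym: "\<And>a b. E a b \<Longrightarrow> E b a" and vert: "vertical_tree V E T"
    and run: "search_run V E T x cs"
  shows "vertical_tree V E (fst (last cs))"
proof -
  have ne: "cs \<noteq> []" and hd: "hd cs = (T, root V T)"
    and steps: "\<And>i. Suc i < length cs \<Longrightarrow> gst_step E (cs ! i) (cs ! Suc i)"
    using run unfolding search_run_def by auto
  have "\<forall>i<length cs. vertical_tree V E (fst (cs ! i))"
    using ne
  proof (rule list_nth_induct)
    show "vertical_tree V E (fst (cs ! 0))"
      using hd ne vert by (simp add: hd_conv_nth[symmetric])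
  next
    fix i
    assume "Suc i < length cs" "vertical_tree V E (fst (cs ! i))"
    then show "vertical_tree V E (fst (cs ! Suc i))"
      using gst_step_vertical[of E V, OF sym] steps by blast
  qed
  then show ?thesis
    using ne by (simp add: last_conv_nth)
qed

text \<open>
  A node \<open>z\<close> that the pointer never visits keeps its subtree during a search, and the searched
  node does not lie in it: to enter the subtree of \<open>z\<close> from above, the pointer would have to
  pass through \<open>z\<close>, and a rotation elsewhere only changes the subtree of \<open>z\<close> if it rotates a
  node of that subtree.
\<close>

lemma gst_step_avoids_subtree:
  assumes sym: "\<And>a b. E a b \<Longrightarrow> E b a"
    and vert: "vertical_tree V E (fst c)" and "snd c \<notin> desc (fst c) z"
    and step: "gst_step E c c'" and "snd c' \<noteq> z"
  shows "desc (fst c') z = desc (fst c) z \<and> snd c' \<notin> desc (fst c) z"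
  using step
proof (cases rule: gst_step_cases)
  case up
  then show ?thesis
    using assms(3) desc_parent[of "fst c" "snd c" "snd c'"] desc_refl
    by (auto simp: mem_desc_iff intro: converse_rtranclp_into_rtranclp)
next
  case down
  have "snd c' \<notin> desc (fst c) z"
  proof
    assume "snd c' \<in> desc (fst c) z"
    then have "(parent_rel (fst c))\<^sup>+\<^sup>+ (snd c') z"
      using \<open>snd c' \<noteq> z\<close> by (auto simp: mem_desc_iff dest: rtranclpD)
    then obtain z1 where "fst c (snd c') = Some z1" "(parent_rel (fst c))\<^sup>*\<^sup>* z1 z"
      by (blast dest: tranclpD)
    then have "snd c \<in> desc (fst c) z"
      using down(2) by (simp add: mem_desc_iff)
    then show False
      using assms(3) by simp
  qed
  then show ?thesis
    using down by simp
next
  case (rotate p)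
  interpret rotation V E "fst c" "snd c" p
    using vert rotate(1) by unfold_locales (simp_all add: vertical_tree_def)
  show ?thesis
    using desc_T'_unchanged[OF assms(3)] rotate assms(3) by (simp add: T'_def)
qed

lemma search_run_untouched:
  assumes sym: "\<And>a b. E a b \<Longrightarrow> E b a" and vert: "vertical_tree V E T"
    and run: "search_run V E T x cs" and unvisited: "z \<notin> snd ` set cs"
  shows "desc (fst (last cs)) z = desc T z" "x \<notin> desc T z"
proof -
  have ne: "cs \<noteq> []" and hd: "hd cs = (T, root V T)"
    and steps: "\<And>i. Suc i < length cs \<Longrightarrow> gst_step E (cs ! i) (cs ! Suc i)"
    and target: "x \<in> snd ` set cs"
    using run unfolding search_run_def by auto
  have rooted: "rooted_tree V T"
    using vert by (simp add: vertical_tree_def)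
  have "root V T \<noteq> z"
    using hd ne unvisited by (metis hd_in_set image_eqI snd_conv)
  then have root_z: "root V T \<notin> desc T z"
    using desc_of_parentless rooted_tree_root(2)[OF rooted] by metis
  define Q where
    "Q c \<longleftrightarrow> vertical_tree V E (fst c) \<and> desc (fst c) z = desc T z \<and> snd c \<notin> desc T z" for c
  have all: "\<forall>i<length cs. Q (cs ! i)"
    using ne
  proof (rule list_nth_induct)
    show "Q (cs ! 0)"
      using hd ne vert root_z by (simp add: Q_def hd_conv_nth[symmetric])
  next
    fix i
    assume i: "Suc i < length cs" "Q (cs ! i)"
    have "snd (cs ! Suc i) \<noteq> z"
      using unvisited i(1) by (metis nth_mem image_eqI)
    then show "Q (cs ! Suc i)"
      using gst_step_avoids_subtree[of E V "cs ! i" z "cs ! Suc i", OF sym]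
        gst_step_vertical[of E V "cs ! i" "cs ! Suc i", OF sym] i steps[OF i(1)]
      by (simp add: Q_def)
  qed
  then show "desc (fst (last cs)) z = desc T z"
    using ne by (simp add: last_conv_nth Q_def)
  show "x \<notin> desc T z"
    using all target by (metis Q_def in_set_conv_nth image_iff)
qed

section \<open>Connected sets have a topmost node\<close>

definition connected_set :: "('a \<Rightarrow> 'a \<Rightarrow> bool) \<Rightarrow> 'a set \<Rightarrow> bool" where
  "connected_set E C \<longleftrightarrow> (\<forall>a\<in>C. \<forall>b\<in>C. (ind_edge E C)\<^sup>*\<^sup>* a b)"

lemma ind_edge_comp:
  "(ind_edge E A)\<^sup>*\<^sup>* w u \<Longrightarrow> (ind_edge E (comp E A w))\<^sup>*\<^sup>* w u"
proof (induction rule: rtranclp_induct)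
  case base
  then show ?case by simp
next
  case (step u u')
  have "u \<in> comp E A w" "u' \<in> comp E A w"
    using step.hyps by (auto simp: comp_def intro: rtranclp.rtrancl_into_rtrancl)
  then have "ind_edge E (comp E A w) u u'"
    using step.hyps(2) by (simp add: ind_edge_def)
  with step.IH show ?case
    by (rule rtranclp.rtrancl_into_rtrancl)
qed

lemma connected_set_comp:
  assumes "\<And>a b. E a b \<Longrightarrow> E b a"
  shows "connected_set E (comp E A w)"
  unfolding connected_set_def
proof (intro ballI)
  fix a b
  assume "a \<in> comp E A w" "b \<in> comp E A w"
  then have wa: "(ind_edge E (comp E A w))\<^sup>*\<^sup>* w a" and wb: "(ind_edge E (comp E A w))\<^sup>*\<^sup>* w b"
    using ind_edge_comp unfolding comp_def by fastforce+
  have "symp (ind_edge E (comp E A w))"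
    using assms by (auto simp: ind_edge_def intro: sympI)
  then have "(ind_edge E (comp E A w))\<^sup>*\<^sup>* a w"
    using wa by (blast intro: sympD[OF symp_rtranclp])
  then show "(ind_edge E (comp E A w))\<^sup>*\<^sup>* a b"
    using wb by (rule rtranclp_trans)
qed

text \<open>
  In a vertical tree, a node \<open>z\<close> of a set \<open>C\<close> whose subtree contains the most nodes of \<open>C\<close>
  is an ancestor of every node reachable from it inside \<open>C\<close>: walking along an edge of \<open>C\<close>
  one never leaves the subtree of \<open>z\<close>, since the endpoint would be a proper ancestor of \<open>z\<close>
  whose subtree contains more of \<open>C\<close>.
\<close>

lemma vertical_tree_walk_below_max:
  assumes vert: "vertical_tree V E T" and "finite C"
    and max: "\<And>b. b \<in> C \<Longrightarrow> card (desc T b \<inter> C) \<le> card (desc T z \<inter> C)"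
    and "(ind_edge E C)\<^sup>*\<^sup>* z b"
  shows "b \<in> desc T z"
  using assms(4)
proof (induction rule: rtranclp_induct)
  case base
  then show ?case by (rule desc_refl)
next
  case (step a b)
  have ab: "b \<in> C" "E a b"
    using step.hyps(2) by (auto simp: ind_edge_def)
  then have "a \<in> desc T b \<or> b \<in> desc T a"
    using vert by (simp add: vertical_tree_def)
  then show ?case
  proof
    assume "b \<in> desc T a"
    then show ?thesis using step.IH by (rule desc_trans)
  next
    assume "a \<in> desc T b"
    then have "(parent_rel T)\<^sup>*\<^sup>* b z \<or> (parent_rel T)\<^sup>*\<^sup>* z b"
      using step.IH ancestors_linear by (simp add: mem_desc_iff)
    moreover have False if "(parent_rel T)\<^sup>*\<^sup>* z b" "b \<notin> desc T z"
    proof -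
      have "desc T z \<inter> C \<subset> desc T b \<inter> C"
        using that ab(1) desc_trans[of _ T z b] desc_refl[of b T] by (auto simp: mem_desc_iff)
      then have "card (desc T z \<inter> C) < card (desc T b \<inter> C)"
        using \<open>finite C\<close> by (simp add: psubset_card_mono)
      then show False
        using max[OF ab(1)] by simp
    qed
    ultimately show ?thesis
      by (auto simp: mem_desc_iff)
  qed
qed

lemma vertical_tree_connected_top:
  assumes vert: "vertical_tree V E T" and "finite C" "C \<noteq> {}" and conn: "connected_set E C"
  shows "\<exists>z\<in>C. C \<subseteq> desc T z"
proof -
  define f where "f z = card (desc T z \<inter> C)" for z
  have "Max (f ` C) \<in> f ` C"
    using \<open>finite C\<close> \<open>C \<noteq> {}\<close> by simp
  then obtain z where z: "z \<in> C" "f z = Max (f ` C)"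
    by auto
  then have "f b \<le> f z" if "b \<in> C" for b
    using \<open>finite C\<close> that by simp
  then have "b \<in> desc T z" if "(ind_edge E C)\<^sup>*\<^sup>* z b" for b
    using vertical_tree_walk_below_max[OF vert \<open>finite C\<close>] that unfolding f_def by blast
  then show ?thesis
    using conn z(1) unfolding connected_set_def by blast
qed

section \<open>Branches of a fixed search tree\<close>

definition child_toward :: "('a \<Rightarrow> 'a option) \<Rightarrow> 'a \<Rightarrow> 'a \<Rightarrow> 'a" where
  "child_toward P y x = (THE c. P c = Some y \<and> x \<in> desc P c)"

definition branch :: "('a \<Rightarrow> 'a option) \<Rightarrow> 'a \<Rightarrow> 'a \<Rightarrow> 'a set" where
  "branch P y x = (if x = y then {y} else desc P (child_toward P y x))"

definition pref_of :: "('a \<Rightarrow> 'a option) \<Rightarrow> ('a \<Rightarrow> 'a) \<Rightarrow> 'a \<Rightarrow> 'a \<Rightarrow> 'a" where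
  "pref_of P d y x = (if x = y then d y else child_toward P y x)"

text \<open>
  \<open>branch_tops P T y\<close> consists of the nodes \<open>z\<close> that are topmost in \<open>T\<close> for some branch of
  \<open>y\<close> in \<open>P\<close> but not for the whole subtree \<open>desc P y\<close>. A change of the preferred child of \<open>y\<close>
  forces a visit to such a node, and each node of \<open>T\<close> lies in \<open>branch_tops P T y\<close> for at
  most one \<open>y\<close>.
\<close>

definition branch_tops :: "('a \<Rightarrow> 'a option) \<Rightarrow> ('a \<Rightarrow> 'a option) \<Rightarrow> 'a \<Rightarrow> 'a set" where
  "branch_tops P T y = {z. \<exists>x\<in>desc P y. z \<in> branch P y x \<and> branch P y x \<subseteq> desc T z
     \<and> \<not> desc P y \<subseteq> desc T z}"

lemma rooted_tree_child_unique:
  assumes rooted: "rooted_tree V P"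
    and "P c = Some y" "P c' = Some y" "x \<in> desc P c" "x \<in> desc P c'"
  shows "c = c'"
proof -
  have sibling: False if "a \<in> desc P b" "a \<noteq> b" "P a = Some y" "P b = Some y" for a b
  proof -
    have "(parent_rel P)\<^sup>+\<^sup>+ a b"
      using that(1,2) by (auto simp: mem_desc_iff dest: rtranclpD)
    then obtain z where "P a = Some z" "(parent_rel P)\<^sup>*\<^sup>* z b"
      by (blast dest: tranclpD)
    then have "y \<in> desc P b"
      using that(3) by (simp add: mem_desc_iff)
    then show False
      using rooted_tree_parent_notin_desc[OF rooted that(4)] by blast
  qed
  have "c \<in> desc P c' \<or> c' \<in> desc P c"
    using ancestors_linear assms(4,5) by (simp add: mem_desc_iff)
  then show ?thesis
    using sibling assms(2,3) by blast
qed

lemma child_toward_eq: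
  assumes "rooted_tree V P" "P c = Some y" "x \<in> desc P c"
  shows "child_toward P y x = c"
  unfolding child_toward_def
  using assms rooted_tree_child_unique[OF assms(1)] by (intro the_equality) blast+

lemma child_toward:
  assumes "rooted_tree V P" "x \<in> desc P y" "x \<noteq> y"
  shows "P (child_toward P y x) = Some y" "x \<in> desc P (child_toward P y x)"
proof -
  obtain c where "P c = Some y" "x \<in> desc P c"
    using assms(2,3) by (cases rule: rtranclp.cases[OF assms(2)[unfolded mem_desc_iff]])
      (auto simp: mem_desc_iff)
  then show "P (child_toward P y x) = Some y" "x \<in> desc P (child_toward P y x)"
    using child_toward_eq[OF assms(1)] by simp_all
qed

lemma comp_eq_desc_child:
  assumes "{desc P c | c. P c = Some r} = comps E A" "u \<in> A"
  obtains c where "P c = Some r" "comp E A u = desc P c" "u \<in> desc P c"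
proof -
  have "comp E A u \<in> {desc P c | c. P c = Some r}"
    using assms by (simp add: comps_def)
  then obtain c where c: "P c = Some r" "comp E A u = desc P c"
    by blast
  moreover have "u \<in> desc P c"
    using c(2)[symmetric] by (simp add: comp_def)
  ultimately show ?thesis
    by (rule that)
qed

lemma vst_edges_vertical:
  assumes "vst E P S r" "\<And>a. \<not> E a a"
  shows "\<forall>a\<in>S. \<forall>b\<in>S. E a b \<longrightarrow> a \<in> desc P b \<or> b \<in> desc P a"
  using assms(1)
proof (induction rule: vst.induct)
  case (1 r S)
  have below_r: "b \<in> desc P r" if b: "b \<in> S" "b \<noteq> r" for b
  proof -
    obtain c where "P c = Some r" "b \<in> desc P c"
      using comp_eq_desc_child[OF 1(2), of b] b by blast
    then show ?thesis
      by (rule desc_parent)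
  qed
  show ?case
  proof (intro ballI impI)
    fix a b
    assume ab: "a \<in> S" "b \<in> S" "E a b"
    show "a \<in> desc P b \<or> b \<in> desc P a"
    proof (cases "a = r \<or> b = r")
      case True
      moreover have "a \<noteq> b"
        using ab(3) assms(2) by blast
      ultimately show ?thesis
        using below_r ab(1,2) by blast
    next
      case False
      then obtain c where c: "P c = Some r" "comp E (S - {r}) a = desc P c" "a \<in> desc P c"
        using comp_eq_desc_child[OF 1(2), of a] ab(1) by blast
      have "b \<in> comp E (S - {r}) a"
        using ab False by (simp add: comp_def ind_edge_def r_into_rtranclp)
      then have "b \<in> desc P c"
        using c(2) by simp
      then show ?thesis
        using 1(3) c(1,3) ab(3) by blast
    qed
  qed
qed

locale search_tree =
  fixes V :: "'a set" and E :: "'a \<Rightarrow> 'a \<Rightarrow> bool" and P :: "'a \<Rightarrow> 'a option"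
  assumes tree_G: "is_tree V E" and valid_P: "valid_st V E P"
begin

lemma finite_V: "finite V"
  using tree_G by (simp add: is_tree_def)

lemma sym: "E a b \<Longrightarrow> E b a"
  using tree_G by (simp add: is_tree_def)

lemma rooted: "rooted_tree V P"
  using valid_P by (simp add: valid_st_def)

lemma vertical_P: "vertical_tree V E P"
proof -
  have "vst E P V (root V P)" "\<And>a. \<not> E a a"
    using valid_P tree_G by (simp_all add: valid_st_def is_tree_def)
  then have "\<forall>a\<in>V. \<forall>b\<in>V. E a b \<longrightarrow> a \<in> desc P b \<or> b \<in> desc P a"
    by (rule vst_edges_vertical)
  moreover have "E a b \<Longrightarrow> a \<in> V \<and> b \<in> V" for a b
    using tree_G by (simp add: is_tree_def)
  ultimately show ?thesis
    using rooted by (simp add: vertical_tree_def)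
qed

lemma vst_desc:
  assumes "y \<in> V"
  shows "vst E P (desc P y) y"
proof -
  have "(parent_rel P)\<^sup>*\<^sup>* y (root V P)"
    using rooted_tree_root(3)[OF rooted] assms by blast
  then show ?thesis
  proof (induction rule: converse_rtranclp_induct)
    case base
    then show ?case
      using valid_P rooted_tree_desc_root[OF rooted] by (simp add: valid_st_def)
  next
    case (step y z)
    then show ?case
      by (auto elim: vst.cases)
  qed
qed

lemma connected_desc_child:
  assumes "y \<in> V" "P c = Some y"
  shows "connected_set E (desc P c)"
proof -
  have "{desc P c | c. P c = Some y} = comps E (desc P y - {y})"
    using vst_desc[OF assms(1)] by (auto elim: vst.cases)
  then have "desc P c \<in> comps E (desc P y - {y})"
    using assms(2) by blast
  then show ?thesis
    using connected_set_comp[of E, OF sym] by (auto simp: comps_def)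
qed

lemma connected_desc:
  assumes "y \<in> V"
  shows "connected_set E (desc P y)"
proof (cases "y = root V P")
  case True
  have "comps E V = {V}"
    using tree_G by (simp add: is_tree_def)
  then have "comp E V y = V"
    using assms by (auto simp: comps_def)
  then show ?thesis
    using True rooted_tree_desc_root[OF rooted] connected_set_comp[of E, OF sym] by metis
next
  case False
  then obtain q where "P y = Some q"
    using assms rooted_tree_root(4)[OF rooted] by fastforce
  then show ?thesis
    using connected_desc_child rooted_tree_parent_in(2)[OF rooted] by blast
qed

lemma finite_desc: "y \<in> V \<Longrightarrow> finite (desc P y)"
  using rooted_tree_desc_subset[OF rooted] finite_V by (rule finite_subset)

lemma mem_branch: "x \<in> desc P y \<Longrightarrow> x \<in> branch P y x"
  using child_toward(2)[OF rooted] by (simp add: branch_def)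

lemma branch_subset_desc:
  assumes "x \<in> desc P y"
  shows "branch P y x \<subseteq> desc P y"
  using assms child_toward(1)[OF rooted assms] desc_parent desc_refl
  by (auto simp: branch_def)

lemma branch_eq:
  assumes "x \<in> desc P y" "z \<in> branch P y x"
  shows "branch P y z = branch P y x"
proof (cases "x = y")
  case False
  note c = child_toward[OF rooted assms(1) False]
  have "z \<in> desc P (child_toward P y x)"
    using assms(2) False by (simp add: branch_def)
  moreover have "z \<noteq> y"
    using calculation rooted_tree_parent_notin_desc[OF rooted c(1)] by blast
  ultimately show ?thesis
    using False child_toward_eq[OF rooted c(1)] by (simp add: branch_def)
qed (use assms in \<open>simp add: branch_def\<close>)

lemma desc_subset_branch:
  assumes "y' \<in> desc P y" "y' \<noteq> y" "z \<in> desc P y'"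
  shows "desc P y' \<subseteq> branch P y z"
proof -
  note c = child_toward[OF rooted assms(1,2)]
  have z: "z \<in> desc P (child_toward P y y')"
    using assms(3) c(2) by (rule desc_trans)
  then have "z \<noteq> y"
    using rooted_tree_parent_notin_desc[OF rooted c(1)] by blast
  then show ?thesis
    using child_toward_eq[OF rooted c(1) z] c(2) desc_trans[of _ P y'] by (auto simp: branch_def)
qed

lemma connected_branch:
  assumes "y \<in> V" "x \<in> desc P y"
  shows "connected_set E (branch P y x)"
  using connected_desc_child[OF assms(1) child_toward(1)[OF rooted assms(2)]]
  by (cases "x = y") (simp_all add: branch_def connected_set_def)

lemma pref_of_eq_if_branch_eq:
  assumes "x \<in> desc P y" "x' \<in> desc P y" "branch P y x = branch P y x'"
  shows "pref_of P d y x = pref_of P d y x'"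
proof -
  have not_singleton: "branch P y z \<noteq> {y}" if "z \<in> desc P y" "z \<noteq> y" for z
    using that child_toward[OF rooted that] rooted_tree_parent_notin_desc[OF rooted]
    by (auto simp: branch_def)
  have "child_toward P y x = child_toward P y x'" if "x \<noteq> y" "x' \<noteq> y"
  proof -
    note c = child_toward[OF rooted assms(1) that(1)] and c' = child_toward[OF rooted assms(2) that(2)]
    have "child_toward P y x \<in> desc P (child_toward P y x')"
      using assms(3) that desc_refl by (metis branch_def)
    then show ?thesis
      using rooted_tree_child_unique[OF rooted c(1) c'(1) desc_refl] by blast
  qed
  then show ?thesis
    using assms not_singleton[of x] not_singleton[of x'] unfolding pref_of_def
    by (cases "x = y"; cases "x' = y") (simp_all add: branch_def)
qed

lemma branch_tops_subset_desc: "z \<in> branch_tops P T y \<Longrightarrow> z \<in> desc P y"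
  unfolding branch_tops_def using branch_subset_desc by blast

lemma branch_tops_unique:
  assumes "z \<in> branch_tops P T y" "z \<in> branch_tops P T y'"
  shows "y = y'"
proof -
  have unique_below: "y' = y"
    if tops: "z \<in> branch_tops P T y" "z \<in> branch_tops P T y'" and "y' \<in> desc P y" for y y'
  proof (rule ccontr)
    assume "y' \<noteq> y"
    obtain x where x: "x \<in> desc P y" "z \<in> branch P y x" "branch P y x \<subseteq> desc T z"
      using tops(1) unfolding branch_tops_def by blast
    have "desc P y' \<subseteq> branch P y z"
      using desc_subset_branch \<open>y' \<in> desc P y\<close> \<open>y' \<noteq> y\<close> branch_tops_subset_desc[OF tops(2)]
      by blast
    also have "\<dots> = branch P y x"
      using branch_eq x by blast
    finally show False
      using x(3) tops(2) unfolding branch_tops_def by blast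
  qed
  have "y \<in> desc P y' \<or> y' \<in> desc P y"
    using ancestors_linear branch_tops_subset_desc[OF assms(1)] branch_tops_subset_desc[OF assms(2)]
    by (simp add: mem_desc_iff)
  then show ?thesis
    using unique_below assms by metis
qed

lemma root_notin_branch_tops:
  assumes "rooted_tree V T" "y \<in> V"
  shows "root V T \<notin> branch_tops P T y"
  using rooted_tree_desc_root[OF assms(1)] rooted_tree_desc_subset[OF rooted assms(2)]
  by (auto simp: branch_tops_def)

end

lemma valid_st_vertical:
  assumes "is_tree V E" "valid_st V E T"
  shows "vertical_tree V E T"
proof -
  interpret search_tree V E T
    using assms by unfold_locales
  show ?thesis
    by (rule vertical_P)
qed

fun exec_trees :: "('a \<Rightarrow> 'a option) \<Rightarrow> (('a \<Rightarrow> 'a option) \<times> 'a) list list \<Rightarrow> ('a \<Rightarrow> 'a option) list"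
where
  "exec_trees T [] = [T]"
| "exec_trees T (cs # css) = T # exec_trees (fst (last cs)) css"

lemma gst_exec_nth:
  assumes "gst_exec V E T X css"
  shows "length css = length X" "exec_trees T css ! 0 = T"
    "\<And>k. k < length X \<Longrightarrow> search_run V E (exec_trees T css ! k) (X ! k) (css ! k)"
    "\<And>k. k < length X \<Longrightarrow> exec_trees T css ! Suc k = fst (last (css ! k))"
proof -
  have "length css = length X \<and> exec_trees T css ! 0 = T \<and>
     (\<forall>k<length X. search_run V E (exec_trees T css ! k) (X ! k) (css ! k)
        \<and> exec_trees T css ! Suc k = fst (last (css ! k)))"
    using assms
  proof (induction X arbitrary: T css)
    case Nil
    then show ?case by (cases css) auto
  next
    case (Cons x xs)
    then obtain cs css' where css: "css = cs # css'"
      by (cases css) auto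
    then have "search_run V E T x cs" "gst_exec V E (fst (last cs)) xs css'"
      using Cons.prems by auto
    then show ?case
      using Cons.IH css by (auto simp: nth_Cons split: nat.split)
  qed
  then show "length css = length X" "exec_trees T css ! 0 = T"
    "\<And>k. k < length X \<Longrightarrow> search_run V E (exec_trees T css ! k) (X ! k) (css ! k)"
    "\<And>k. k < length X \<Longrightarrow> exec_trees T css ! Suc k = fst (last (css ! k))"
    by simp_all
qed

locale execution = search_tree +
  fixes T0 :: "'a \<Rightarrow> 'a option" and X :: "'a list"
    and css :: "(('a \<Rightarrow> 'a option) \<times> 'a) list list"
  assumes valid_T0: "valid_st V E T0" and exec: "gst_exec V E T0 X css"
begin

text \<open>\<open>tree k\<close> is the tree before the search for \<open>X ! k\<close>, the paper's \<open>x\<^sub>k\<^sub>+\<^sub>1\<close>.\<close>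

definition tree :: "nat \<Rightarrow> 'a \<Rightarrow> 'a option" where
  "tree k = exec_trees T0 css ! k"

definition visited :: "nat \<Rightarrow> 'a \<Rightarrow> bool" where
  "visited k z \<longleftrightarrow> z \<in> snd ` set (css ! k)"

definition charged :: "'a \<Rightarrow> nat \<Rightarrow> bool" where
  "charged y k \<longleftrightarrow> (\<exists>z\<in>branch_tops P (tree k) y. visited k z)"

definition branch_on_top :: "nat \<Rightarrow> 'a \<Rightarrow> 'a \<Rightarrow> bool" where
  "branch_on_top k y x \<longleftrightarrow> (\<exists>z\<in>branch P y x. desc P y \<subseteq> desc (tree k) z)"

lemma length_css: "length css = length X"
  using gst_exec_nth(1)[OF exec] .

lemma search_run_tree: "k < length X \<Longrightarrow> search_run V E (tree k) (X ! k) (css ! k)"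
  using gst_exec_nth(3)[OF exec] by (simp add: tree_def)

lemma tree_Suc: "k < length X \<Longrightarrow> tree (Suc k) = fst (last (css ! k))"
  using gst_exec_nth(4)[OF exec] by (simp add: tree_def)

lemma vertical_tree: "k \<le> length X \<Longrightarrow> vertical_tree V E (tree k)"
proof (induction k)
  case 0
  then show ?case
    using gst_exec_nth(2)[OF exec] valid_st_vertical[OF tree_G valid_T0] by (simp add: tree_def)
next
  case (Suc k)
  then show ?case
    using search_run_vertical[of E V, OF sym Suc.IH search_run_tree] tree_Suc by simp
qed

lemma rooted_tree_tree: "k \<le> length X \<Longrightarrow> rooted_tree V (tree k)"
  using vertical_tree by (simp add: vertical_tree_def)

lemma unvisited:
  assumes "k < length X" "\<not> visited k z"
  shows "desc (tree (Suc k)) z = desc (tree k) z" "X ! k \<notin> desc (tree k) z"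
  using search_run_untouched[of E V, OF sym vertical_tree search_run_tree] assms tree_Suc
  by (simp_all add: visited_def)

lemma top_of_branch:
  assumes "k \<le> length X" "y \<in> V" "x \<in> desc P y"
  shows "\<exists>z\<in>branch P y x. branch P y x \<subseteq> desc (tree k) z"
proof (rule vertical_tree_connected_top)
  show "vertical_tree V E (tree k)"
    using vertical_tree assms(1) .
  show "finite (branch P y x)"
    using branch_subset_desc[OF assms(3)] finite_desc[OF assms(2)] by (rule finite_subset)
  show "branch P y x \<noteq> {}"
    using mem_branch[OF assms(3)] by blast
  show "connected_set E (branch P y x)"
    using connected_branch assms(2,3) .
qed

lemma top_of_desc:
  assumes "k \<le> length X" "y \<in> V"
  shows "\<exists>w\<in>desc P y. desc P y \<subseteq> desc (tree k) w"
proof (rule vertical_tree_connected_top)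
  show "vertical_tree V E (tree k)"
    using vertical_tree assms(1) .
  show "finite (desc P y)" "connected_set E (desc P y)"
    using finite_desc connected_desc assms(2) by blast+
  show "desc P y \<noteq> {}"
    using desc_refl[of y P] by blast
qed

text \<open>
  If \<open>y\<close> is not charged during the search for \<open>X ! k \<in> desc P y\<close>, then the topmost node of
  \<open>desc P y\<close> in \<open>tree k\<close> lies in the branch of \<open>X ! k\<close>: otherwise the top of that branch is
  in \<open>branch_tops\<close>, and the search must visit it to reach \<open>X ! k\<close>.
\<close>

lemma branch_on_top_search:
  assumes k: "k < length X" and y: "y \<in> V" and target: "X ! k \<in> desc P y"
    and not_charged: "\<not> charged y k"
  shows "branch_on_top k y (X ! k)"
proof -
  obtain z where z: "z \<in> branch P y (X ! k)" "branch P y (X ! k) \<subseteq> desc (tree k) z"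
    using top_of_branch[OF less_imp_le[OF k] y target] by blast
  show ?thesis
  proof (cases "desc P y \<subseteq> desc (tree k) z")
    case True
    then show ?thesis
      using z(1) by (auto simp: branch_on_top_def)
  next
    case False
    then have "z \<in> branch_tops P (tree k) y"
      using z target unfolding branch_tops_def by blast
    then have "X ! k \<notin> desc (tree k) z"
      using not_charged unvisited(2) k by (auto simp: charged_def)
    moreover have "X ! k \<in> desc (tree k) z"
      using z mem_branch[OF target] by blast
    ultimately show ?thesis
      by blast
  qed
qed

text \<open>
  The branch holding the top of \<open>desc P y\<close> can change only while \<open>y\<close> is charged: the top \<open>w\<close>
  after the search lies in some branch, whose own top \<open>z\<close> before the search is in
  \<open>branch_tops\<close> unless that branch already held the top; an unvisited \<open>z\<close> keeps its subtree,
  which then contains \<open>w\<close> and hence all of \<open>desc P y\<close>.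
\<close>

lemma branch_on_top_Suc:
  assumes k: "k < length X" and y: "y \<in> V" and x: "x \<in> desc P y" and not_charged: "\<not> charged y k"
    and on_top: "branch_on_top k y x"
  shows "branch_on_top (Suc k) y x"
proof -
  obtain z where z: "z \<in> branch P y x" "desc P y \<subseteq> desc (tree k) z"
    using on_top by (auto simp: branch_on_top_def)
  obtain w where w: "w \<in> desc P y" "desc P y \<subseteq> desc (tree (Suc k)) w"
    using top_of_desc[OF Suc_leI[OF k] y] by blast
  show ?thesis
  proof (cases "branch P y w = branch P y x")
    case True
    then show ?thesis
      using mem_branch[OF w(1)] w(2) by (auto simp: branch_on_top_def)
  next
    case False
    obtain z' where z': "z' \<in> branch P y w" "branch P y w \<subseteq> desc (tree k) z'"
      using top_of_branch[OF less_imp_le[OF k] y w(1)] by blast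
    have "\<not> desc P y \<subseteq> desc (tree k) z'"
    proof
      assume "desc P y \<subseteq> desc (tree k) z'"
      moreover have "z \<in> desc P y" "z' \<in> desc P y"
        using branch_subset_desc x z(1) w(1) z'(1) by blast+
      ultimately have "z = z'"
        using z(2) rooted_tree_desc_antisym[OF rooted_tree_tree] k by (meson less_imp_le subsetD)
      then show False
        using branch_eq[OF x z(1)] branch_eq[OF w(1) z'(1)] False by simp
    qed
    then have "z' \<in> branch_tops P (tree k) y"
      using z' w(1) unfolding branch_tops_def by blast
    then have same: "desc (tree (Suc k)) z' = desc (tree k) z'"
      using not_charged unvisited(1) k by (auto simp: charged_def)
    have "w \<in> desc (tree (Suc k)) z'"
      using same z'(2) mem_branch[OF w(1)] by blast
    then have "desc P y \<subseteq> desc (tree k) z'"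
      using w(2) same desc_trans[of _ "tree (Suc k)" w z'] by blast
    with \<open>\<not> desc P y \<subseteq> desc (tree k) z'\<close> show ?thesis
      by blast
  qed
qed

lemma charged_between:
  assumes y: "y \<in> V" and "j \<le> k" "k < length X"
    and xj: "X ! j \<in> desc P y" and xk: "X ! k \<in> desc P y"
    and branches: "branch P y (X ! j) \<noteq> branch P y (X ! k)"
  shows "\<exists>s. j \<le> s \<and> s \<le> k \<and> charged y s"
proof (rule ccontr)
  assume "\<not> ?thesis"
  then have not_charged: "\<And>s. j \<le> s \<Longrightarrow> s \<le> k \<Longrightarrow> \<not> charged y s"
    by blast
  have "branch_on_top (j + i) y (X ! j)" if "j + i \<le> k" for i
    using that
  proof (induction i)
    case 0
    then show ?case
      using branch_on_top_search[OF _ y xj not_charged] \<open>k < length X\<close> by simp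
  next
    case (Suc i)
    then show ?case
      using branch_on_top_Suc[OF _ y xj not_charged] \<open>k < length X\<close> by simp
  qed
  from this[of "k - j"] obtain z where z: "z \<in> branch P y (X ! j)" "desc P y \<subseteq> desc (tree k) z"
    using \<open>j \<le> k\<close> by (auto simp: branch_on_top_def)
  obtain z' where z': "z' \<in> branch P y (X ! k)" "desc P y \<subseteq> desc (tree k) z'"
    using branch_on_top_search[OF \<open>k < length X\<close> y xk not_charged[OF \<open>j \<le> k\<close> order_refl]]
    by (auto simp: branch_on_top_def)
  have "z \<in> desc P y" "z' \<in> desc P y"
    using z(1) z'(1) branch_subset_desc xj xk by blast+
  then have "z = z'"
    using z(2) z'(2) rooted_tree_desc_antisym[OF rooted_tree_tree] \<open>k < length X\<close>
    by (meson less_imp_le subsetD)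
  then show False
    using branch_eq[OF xj z(1)] branch_eq[OF xk z'(1)] branches by simp
qed

end

section \<open>Counting changes of preferred children\<close>

context execution
begin

definition hits :: "'a \<Rightarrow> nat \<Rightarrow> nat set" where
  "hits y k = {j. j < k \<and> X ! j \<in> desc P y}"

text \<open>
  \<open>k \<in> switches d y\<close> means that the preferred child of \<open>y\<close> changes with the search for
  \<open>X ! k\<close>; these are the times counted by \<open>interleave_node\<close>, shifted down by one.
\<close>

definition switches :: "('a \<Rightarrow> 'a) \<Rightarrow> 'a \<Rightarrow> nat set" where
  "switches d y = {k. 1 \<le> k \<and> k < length X \<and> pref_child P d X y k \<noteq> None
     \<and> pref_child P d X y (Suc k) \<noteq> pref_child P d X y k}"

lemma interleave_node_eq_card_switches: "interleave_node P d X y = card (switches d y)"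
proof -
  have "{t. 2 \<le> t \<and> t \<le> length X \<and> pref_child P d X y (t - 1) \<noteq> None
      \<and> pref_child P d X y t \<noteq> pref_child P d X y (t - 1)} = Suc ` switches d y"
      (is "?times = _")
  proof (intro set_eqI iffI)
    fix t
    assume "t \<in> ?times"
    then show "t \<in> Suc ` switches d y"
      by (intro image_eqI[of _ _ "t - 1"]) (auto simp: switches_def)
  qed (auto simp: switches_def)
  then show ?thesis
    by (simp add: interleave_node_def card_image)
qed

lemma finite_hits: "finite (hits y k)"
  by (rule finite_subset[of _ "{..<k}"]) (auto simp: hits_def)

lemma last_hit:
  assumes "hits y k \<noteq> {}"
  shows "Max (hits y k) < k" "X ! Max (hits y k) \<in> desc P y"
  using Max_in[OF finite_hits assms] by (simp_all add: hits_def)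

lemma le_last_hit: "j < k \<Longrightarrow> X ! j \<in> desc P y \<Longrightarrow> j \<le> Max (hits y k)"
  using finite_hits by (auto simp: hits_def)

lemma hits_Suc: "hits y (Suc k) = (if X ! k \<in> desc P y then insert k (hits y k) else hits y k)"
  by (auto simp: hits_def less_Suc_eq)

lemma pref_child_eq:
  "pref_child P d X y k = (if hits y k = {} \<or> (\<nexists>c. P c = Some y) then None
     else Some (pref_of P d y (X ! Max (hits y k))))"
  unfolding pref_child_def hits_def pref_of_def child_toward_def Let_def by simp

lemma switch_changes_branch:
  assumes "k \<in> switches d y"
  shows "X ! k \<in> desc P y" "hits y k \<noteq> {}"
    "branch P y (X ! Max (hits y k)) \<noteq> branch P y (X ! k)"
proof -
  have defined: "pref_child P d X y k \<noteq> None"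
    and change: "pref_child P d X y (Suc k) \<noteq> pref_child P d X y k"
    using assms by (simp_all add: switches_def)
  then have hits: "hits y k \<noteq> {}" and child: "\<exists>c. P c = Some y"
    by (auto simp: pref_child_eq split: if_splits)
  show "X ! k \<in> desc P y"
  proof (rule ccontr)
    assume "X ! k \<notin> desc P y"
    then have same: "hits y (Suc k) = hits y k"
      by (simp add: hits_Suc)
    show False
      using change unfolding pref_child_eq[of d y "Suc k"] same by (simp add: pref_child_eq)
  qed
  then have "Max (hits y (Suc k)) = k"
    using hits_Suc[of y k] last_hit(1)[OF hits] Max_insert[OF finite_hits hits] by simp
  then have "pref_of P d y (X ! Max (hits y k)) \<noteq> pref_of P d y (X ! k)"
    using change hits child \<open>X ! k \<in> desc P y\<close> by (auto simp: pref_child_eq hits_Suc)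
  then show "branch P y (X ! Max (hits y k)) \<noteq> branch P y (X ! k)"
    using pref_of_eq_if_branch_eq last_hit(2)[OF hits] \<open>X ! k \<in> desc P y\<close> by blast
  show "hits y k \<noteq> {}"
    by (rule hits)
qed

text \<open>
  If every element \<open>k\<close> of \<open>A\<close> is charged to a point \<open>f k\<close> of the interval \<open>[lo k, k]\<close>,
  and these intervals overlap in at most one point, then every point is charged at most
  twice: once with \<open>f k = k\<close> and once with \<open>f k < k\<close>.
\<close>

lemma card_le_twice_if_chained_intervals:
  fixes f lo :: "nat \<Rightarrow> nat"
  assumes "finite C" "f ` A \<subseteq> C" "\<And>k. k \<in> A \<Longrightarrow> lo k \<le> f k \<and> f k \<le> k"
    and chained: "\<And>k1 k2. k1 \<in> A \<Longrightarrow> k2 \<in> A \<Longrightarrow> k1 < k2 \<Longrightarrow> k1 \<le> lo k2"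
  shows "card A \<le> 2 * card C"
proof -
  have fixed: "f k1 = k1" if "k1 \<in> A" "k2 \<in> A" "k1 < k2" "f k1 = f k2" for k1 k2
    using assms(3)[OF that(1)] assms(3)[OF that(2)] chained[OF that(1-3)] that(4) by linarith
  have "inj_on f {k \<in> A. f k = k}"
    by (auto intro: inj_onI)
  moreover have "inj_on f {k \<in> A. f k \<noteq> k}"
  proof (rule inj_onI)
    fix k1 k2
    assume "k1 \<in> {k \<in> A. f k \<noteq> k}" "k2 \<in> {k \<in> A. f k \<noteq> k}" "f k1 = f k2"
    then show "k1 = k2"
      using fixed[of k1 k2] fixed[of k2 k1] by (cases k1 k2 rule: linorder_cases) auto
  qed
  ultimately have "card {k \<in> A. f k = k} \<le> card C" "card {k \<in> A. f k \<noteq> k} \<le> card C"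
    using assms(1,2) by (auto intro: card_inj_on_le)
  moreover have "A = {k \<in> A. f k = k} \<union> {k \<in> A. f k \<noteq> k}"
    by blast
  then have "card A \<le> card {k \<in> A. f k = k} + card {k \<in> A. f k \<noteq> k}"
    by (metis card_Un_le)
  ultimately show ?thesis
    by simp
qed

lemma card_switches_le:
  assumes y: "y \<in> V"
  shows "card (switches d y) \<le> 2 * card {s \<in> {..<length X}. charged y s}"
proof -
  have "\<exists>s. Max (hits y k) \<le> s \<and> s \<le> k \<and> charged y s" if "k \<in> switches d y" for k
  proof -
    note sw = switch_changes_branch[OF that]
    have "k < length X"
      using that by (simp add: switches_def)
    then show ?thesis
      using charged_between[OF y _ _ last_hit(2)[OF sw(2)] sw(1) sw(3)] last_hit(1)[OF sw(2)]
      by simp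
  qed
  then obtain f where f: "\<And>k. k \<in> switches d y \<Longrightarrow>
      Max (hits y k) \<le> f k \<and> f k \<le> k \<and> charged y (f k)"
    by metis
  show ?thesis
  proof (rule card_le_twice_if_chained_intervals)
    show "f ` switches d y \<subseteq> {s \<in> {..<length X}. charged y s}"
      using f by (fastforce simp: switches_def)
    show "k1 \<le> Max (hits y k2)" if "k1 \<in> switches d y" "k1 < k2" for k1 k2
      using le_last_hit switch_changes_branch(1) that by blast
  qed (use f in simp_all)
qed

lemma visited_root:
  assumes "k < length X"
  shows "visited k (root V (tree k))"
proof -
  have "css ! k \<noteq> []" "hd (css ! k) = (tree k, root V (tree k))"
    using search_run_tree[OF assms] by (simp_all add: search_run_def)
  then show ?thesis
    unfolding visited_def by (metis hd_in_set image_eqI snd_conv)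
qed

lemma card_image_set_Diff_le:
  assumes "a \<in> f ` set xs"
  shows "card (f ` set xs - {a}) \<le> length xs - 1"
  using assms card_image_le[of "set xs" f] card_length[of xs] by (simp add: card_Diff_singleton)

text \<open>
  The nodes charged by one search have pairwise distinct witnesses in \<open>branch_tops\<close>, all
  visited and none equal to the root, where the search starts.
\<close>

lemma card_charged_le_cost:
  assumes k: "k < length X"
  shows "card {y \<in> V. charged y k} \<le> length (css ! k) - 1"
proof -
  have "\<forall>y. \<exists>z. charged y k \<longrightarrow> z \<in> branch_tops P (tree k) y \<and> visited k z"
    unfolding charged_def by blast
  then obtain h where h: "\<And>y. charged y k \<Longrightarrow> h y \<in> branch_tops P (tree k) y \<and> visited k (h y)"
    by (metis choice)
  have "inj_on h {y \<in> V. charged y k}"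
    using h branch_tops_unique by (intro inj_onI) (metis mem_Collect_eq)
  moreover have "h ` {y \<in> V. charged y k} \<subseteq> snd ` set (css ! k) - {root V (tree k)}"
    using h root_notin_branch_tops[OF rooted_tree_tree] k by (fastforce simp: visited_def)
  ultimately have "card {y \<in> V. charged y k} \<le> card (snd ` set (css ! k) - {root V (tree k)})"
    by (intro card_inj_on_le) simp_all
  also have "\<dots> \<le> length (css ! k) - 1"
    using visited_root[OF k] unfolding visited_def by (rule card_image_set_Diff_le)
  finally show ?thesis .
qed

lemma interleave_le_cost: "interleave V P d X \<le> 2 * exec_cost css"
proof -
  have "interleave V P d X = (\<Sum>y\<in>V. card (switches d y))"
    by (simp add: interleave_def interleave_node_eq_card_switches)
  also have "\<dots> \<le> (\<Sum>y\<in>V. 2 * card {s \<in> {..<length X}. charged y s})"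
    by (intro sum_mono card_switches_le)
  also have "\<dots> = 2 * (\<Sum>s<length X. card {y \<in> V. charged y s})"
    using sum.swap_restrict[of V "{..<length X}" "\<lambda>_ _. 1::nat" charged] finite_V
    by (simp add: sum_distrib_left[symmetric])
  also have "\<dots> \<le> 2 * (\<Sum>s<length X. length (css ! s) - 1)"
    using card_charged_le_cost by (intro mult_left_mono sum_mono) simp_all
  also have "\<dots> = 2 * exec_cost css"
    by (simp add: exec_cost_def sum_list_sum_nth length_css atLeast0LessThan)
  finally show ?thesis .
qed

end

lemma walk_down_from_root:
  assumes "(parent_rel T)\<^sup>*\<^sup>* x (root V T)"
  shows "\<exists>cs. cs \<noteq> [] \<and> hd cs = (T, root V T)
    \<and> (\<forall>i. Suc i < length cs \<longrightarrow> gst_step E (cs ! i) (cs ! Suc i)) \<and> last cs = (T, x)"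
  using assms
proof (induction rule: converse_rtranclp_induct)
  case base
  show ?case
    by (rule exI[of _ "[(T, root V T)]"]) simp
next
  case (step y z)
  then obtain cs where cs: "cs \<noteq> []" "hd cs = (T, root V T)"
    "\<forall>i. Suc i < length cs \<longrightarrow> gst_step E (cs ! i) (cs ! Suc i)" "last cs = (T, z)"
    by blast
  have down: "gst_step E (last cs) (T, y)"
    using cs(4) step.hyps(1) by (simp add: gst_step_def)
  have "gst_step E ((cs @ [(T, y)]) ! i) ((cs @ [(T, y)]) ! Suc i)"
    if "Suc i < length (cs @ [(T, y)])" for i
  proof (cases "Suc i < length cs")
    case True
    then show ?thesis
      using cs(3) by (simp add: nth_append)
  next
    case False
    then have "i = length cs - 1"
      using that by simp
    then show ?thesis
      using down cs(1) by (simp add: nth_append last_conv_nth)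
  qed
  then show ?case
    using cs(1,2) by (intro exI[of _ "cs @ [(T, y)]"]) simp
qed

lemma search_run_exists:
  assumes "rooted_tree V T" "x \<in> V"
  shows "\<exists>cs. search_run V E T x cs \<and> fst (last cs) = T"
proof -
  obtain cs where "cs \<noteq> []" "hd cs = (T, root V T)"
    "\<forall>i. Suc i < length cs \<longrightarrow> gst_step E (cs ! i) (cs ! Suc i)" "last cs = (T, x)"
    using walk_down_from_root[of T x V E] assms rooted_tree_root(3) by blast
  then show ?thesis
    unfolding search_run_def by (metis last_in_set image_eqI snd_conv fst_conv)
qed

lemma gst_exec_exists:
  assumes "rooted_tree V T" "set X \<subseteq> V"
  shows "\<exists>css. gst_exec V E T X css"
  using assms(2)
proof (induction X)
  case Nil
  show ?case
    by (rule exI[of _ "[]"]) simp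
next
  case (Cons x xs)
  then obtain css where "gst_exec V E T xs css"
    by auto
  moreover obtain cs where "search_run V E T x cs" "fst (last cs) = T"
    using search_run_exists[OF assms(1)] Cons.prems by auto
  ultimately show ?case
    by (intro exI[of _ "cs # css"]) simp
qed

lemma OPT_attained:
  assumes "valid_st V E T" "gst_exec V E T X css"
  obtains T0 css0 where "valid_st V E T0" "gst_exec V E T0 X css0" "OPT V E X = exec_cost css0"
proof -
  let ?costs = "{exec_cost css | T0 css. valid_st V E T0 \<and> gst_exec V E T0 X css}"
  have "?costs \<noteq> {}"
    using assms by blast
  then have "Inf ?costs \<in> ?costs"
    by (rule Inf_nat_def1)
  then show ?thesis
    using that unfolding OPT_def by blast
qed

theorem theorem1:
  fixes V :: "'a set" and E :: "'a \<Rightarrow> 'a \<Rightarrow> bool"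
    and P :: "'a \<Rightarrow> 'a option" and d :: "'a \<Rightarrow> 'a" and X :: "'a list"
  assumes "is_tree V E"
    and "valid_st V E P"
    and "\<forall>y\<in>V. (\<exists>c. P c = Some y) \<longrightarrow> P (d y) = Some y"
    and "set X \<subseteq> V"
  shows "real (OPT V E X) \<ge> real (interleave V P d X) / 2 - real (card V)"
proof -
  interpret search_tree V E P
    using assms(1,2) by unfold_locales
  obtain css where "gst_exec V E P X css"
    using gst_exec_exists[OF rooted assms(4)] by blast
  then obtain T0 css0 where T0: "valid_st V E T0" "gst_exec V E T0 X css0"
    and opt: "OPT V E X = exec_cost css0"
    using OPT_attained assms(2) by blast
  interpret execution V E P T0 X css0
    using T0 by unfold_locales
  have "interleave V P d X \<le> 2 * OPT V E X"
    using interleave_le_cost opt by simp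
  then show ?thesis
    by linarith
qed

end
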